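(* Let $H_1,H_2$ be vertex-disjoint graphs, let $Y_1$ be a minimal blocking set of $H_1$ with $|Y_1|\ge2$, let $Y_2$ be a minimal blocking set of $H_2$, and let $y_1\in Y_1$, $y_2\in Y_2$. Let $H$ be the graph with vertex set $V(H_1)\cup V(H_2)$ and edge set $E(H_1)\cup E(H_2)\cup\{\{y_1,y_2\}\}$. Then $\mathrm{OPT}(H)=\mathrm{OPT}(H_1)+\mathrm{OPT}(H_2)$ and $(Y_1\cup Y_2)\setminus\{y_1,y_2\}$ is a minimal blocking set of $H$.
   Context: $\mathrm{OPT}(G)$ is the minimum vertex cover size. $Y\subseteq V(G)$ is a blocking set of $G$ if no vertex cover of $G$ of size $\mathrm{OPT}(G)$ contains $Y$; minimal if no proper subset is a blocking set. *)

theory Defs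
  imports Main
begin

definition graph :: "'a set \<Rightarrow> 'a set set \<Rightarrow> bool" where
  "graph V E \<longleftrightarrow> finite V \<and> (\<forall>e\<in>E. e \<subseteq> V \<and> card e = 2)"

definition vertex_cover :: "'a set \<Rightarrow> 'a set set \<Rightarrow> 'a set \<Rightarrow> bool" where
  "vertex_cover V E C \<longleftrightarrow> C \<subseteq> V \<and> (\<forall>e\<in>E. e \<inter> C \<noteq> {})"

definition OPT :: "'a set \<Rightarrow> 'a set set \<Rightarrow> nat" where
  "OPT V E = Min (card ` {C. vertex_cover V E C})"

definition blocking_set :: "'a set \<Rightarrow> 'a set set \<Rightarrow> 'a set \<Rightarrow> bool" where
  "blocking_set V E Y \<longleftrightarrow> Y \<subseteq> V \<and>
     \<not> (\<exists>C. vertex_cover V E C \<and> card C = OPT V E \<and> Y \<subseteq> C)"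

definition minimal_blocking_set :: "'a set \<Rightarrow> 'a set set \<Rightarrow> 'a set \<Rightarrow> bool" where
  "minimal_blocking_set V E Y \<longleftrightarrow> blocking_set V E Y \<and>
     (\<forall>Y'. Y' \<subset> Y \<longrightarrow> \<not> blocking_set V E Y')"

end

theory Submission
  imports Defs
begin

text \<open>Every vertex cover C of H splits into covers of H1 and H2, so OPT(H) \<ge> OPT(H1) + OPT(H2),
  and if equality holds both halves of a minimum cover of H are minimum. Conversely the union of
  minimum covers of H1 and H2 covers H exactly when it contains y1 or y2. Minimality of Y1 applied
  to Y1 - {y'} with y' \<noteq> y1 yields a minimum cover of H1 through y1, giving equality of the optima.
  A minimum cover of H containing (Y1 \<union> Y2) - {y1, y2} contains y1 or y2, so one of its halves would
  be a minimum cover containing Y1 or Y2. For a proper subset Y', either its H1-part misses a vertex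
  of Y1 - {y1} (then a minimum cover of H1 through y1 contains it) or its H2-part misses a vertex of
  Y2 - {y2} (symmetrically); with any minimum cover of the other side this gives a minimum cover of H
  containing Y'.\<close>

definition minimum_vertex_cover :: "'a set \<Rightarrow> 'a set set \<Rightarrow> 'a set \<Rightarrow> bool" where
  "minimum_vertex_cover V E C \<longleftrightarrow> vertex_cover V E C \<and> card C = OPT V E"

lemma blocking_set_iff:
  "blocking_set V E Y \<longleftrightarrow> Y \<subseteq> V \<and> (\<forall>C. minimum_vertex_cover V E C \<longrightarrow> \<not> Y \<subseteq> C)"
  unfolding blocking_set_def minimum_vertex_cover_def by blast

lemma minimal_blocking_set_subset:
  assumes "minimal_blocking_set V E Y"
  shows "Y \<subseteq> V"
  using assms unfolding minimal_blocking_set_def blocking_set_def by blast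

lemma minimal_blocking_set_psubset_covered:
  assumes "minimal_blocking_set V E Y" and "Y' \<subset> Y"
  obtains C where "minimum_vertex_cover V E C" and "Y' \<subseteq> C"
  using assms minimal_blocking_set_subset[OF assms(1)]
  unfolding minimal_blocking_set_def blocking_set_iff by blast

lemma finite_card_vertex_covers:
  assumes "graph V E"
  shows "finite (card ` {C. vertex_cover V E C})"
proof -
  have "card ` {C. vertex_cover V E C} \<subseteq> card ` Pow V"
    unfolding vertex_cover_def by auto
  moreover have "finite V" using assms unfolding graph_def by simp
  ultimately show ?thesis by (meson finite_Pow_iff finite_imageI finite_subset)
qed

lemma OPT_le_card:
  assumes "graph V E" and "vertex_cover V E C"
  shows "OPT V E \<le> card C"
  unfolding OPT_def using finite_card_vertex_covers[OF assms(1)] assms(2) by simp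

lemma vertex_cover_vertices:
  assumes "graph V E"
  shows "vertex_cover V E V"
  using assms unfolding graph_def vertex_cover_def
  by (metis Int_absorb2 card.empty order_refl zero_neq_numeral)

lemma minimum_vertex_cover_exists:
  assumes "graph V E"
  obtains C where "minimum_vertex_cover V E C"
proof -
  have "card ` {C. vertex_cover V E C} \<noteq> {}"
    using vertex_cover_vertices[OF assms] by blast
  from Min_in[OF finite_card_vertex_covers[OF assms] this] that show ?thesis
    unfolding OPT_def minimum_vertex_cover_def by auto
qed

lemma minimal_blocking_set_member_covered:
  assumes "minimal_blocking_set V E Y" and "y \<in> Y" and "card Y \<ge> 2"
  obtains C where "minimum_vertex_cover V E C" and "y \<in> C"
proof -
  have "Y \<noteq> {y}" using assms(3) by auto
  then obtain y' where "y' \<in> Y" "y' \<noteq> y" using assms(2) by blast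
  then have "Y - {y'} \<subset> Y" and "y \<in> Y - {y'}" using assms(2) by auto
  with minimal_blocking_set_psubset_covered[OF assms(1)] that show ?thesis by blast
qed

lemma vertex_cover_restrict:
  assumes "graph V' E'" and "E' \<subseteq> E" and "vertex_cover V E C"
  shows "vertex_cover V' E' (C \<inter> V')"
  unfolding vertex_cover_def
proof (intro conjI ballI)
  fix e assume "e \<in> E'"
  then have "e \<subseteq> V'" and "e \<inter> C \<noteq> {}"
    using assms unfolding graph_def vertex_cover_def by auto
  then show "e \<inter> (C \<inter> V') \<noteq> {}" by blast
qed simp

locale bridged_graphs =
  fixes V1 V2 :: "'a set" and E1 E2 :: "'a set set" and y1 y2 :: 'a
  assumes graph1: "graph V1 E1" and graph2: "graph V2 E2"
    and disjoint: "V1 \<inter> V2 = {}"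
    and y1_vertex: "y1 \<in> V1" and y2_vertex: "y2 \<in> V2"
begin

abbreviation "V \<equiv> V1 \<union> V2"
abbreviation "E \<equiv> E1 \<union> E2 \<union> {{y1, y2}}"

lemma graph: "graph V E"
proof -
  have "y1 \<noteq> y2" using disjoint y1_vertex y2_vertex by blast
  with graph1 graph2 y1_vertex y2_vertex show ?thesis unfolding graph_def by auto
qed

lemma card_Un_sides:
  assumes "C1 \<subseteq> V1" and "C2 \<subseteq> V2"
  shows "card (C1 \<union> C2) = card C1 + card C2"
proof -
  have "finite V1" "finite V2" using graph1 graph2 unfolding graph_def by auto
  with assms disjoint show ?thesis by (meson card_Un_disjoint disjoint_iff finite_subset subsetD)
qed

lemma vertex_cover_Un:
  assumes "vertex_cover V1 E1 C1" and "vertex_cover V2 E2 C2" and "y1 \<in> C1 \<or> y2 \<in> C2"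
  shows "vertex_cover V E (C1 \<union> C2)"
  using assms unfolding vertex_cover_def by auto

lemma vertex_cover_split:
  assumes "vertex_cover V E C"
  shows "vertex_cover V1 E1 (C \<inter> V1)" and "vertex_cover V2 E2 (C \<inter> V2)"
    and "card C = card (C \<inter> V1) + card (C \<inter> V2)"
proof -
  show "vertex_cover V1 E1 (C \<inter> V1)" "vertex_cover V2 E2 (C \<inter> V2)"
    using vertex_cover_restrict[OF graph1 _ assms] vertex_cover_restrict[OF graph2 _ assms] by auto
  have "C = (C \<inter> V1) \<union> (C \<inter> V2)" using assms unfolding vertex_cover_def by auto
  then show "card C = card (C \<inter> V1) + card (C \<inter> V2)"
    using card_Un_sides[of "C \<inter> V1" "C \<inter> V2"] by auto
qed

lemma vertex_cover_card_ge:
  assumes "vertex_cover V E C"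
  shows "OPT V1 E1 + OPT V2 E2 \<le> card C"
  using vertex_cover_split[OF assms] OPT_le_card[OF graph1] OPT_le_card[OF graph2] by (metis add_mono)

lemma OPT_eq:
  assumes "minimum_vertex_cover V1 E1 C1" and "y1 \<in> C1"
  shows "OPT V E = OPT V1 E1 + OPT V2 E2"
proof (rule antisym)
  obtain C2 where C2: "minimum_vertex_cover V2 E2 C2"
    using minimum_vertex_cover_exists[OF graph2] by blast
  have "vertex_cover V E (C1 \<union> C2)"
    using assms C2 vertex_cover_Un unfolding minimum_vertex_cover_def by blast
  moreover have "card (C1 \<union> C2) = OPT V1 E1 + OPT V2 E2"
    using assms(1) C2 card_Un_sides unfolding minimum_vertex_cover_def vertex_cover_def by auto
  ultimately show "OPT V E \<le> OPT V1 E1 + OPT V2 E2" using OPT_le_card[OF graph] by metis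
  obtain C where "minimum_vertex_cover V E C" using minimum_vertex_cover_exists[OF graph] by blast
  then show "OPT V1 E1 + OPT V2 E2 \<le> OPT V E"
    using vertex_cover_card_ge unfolding minimum_vertex_cover_def by metis
qed

context
  assumes OPT_additive: "OPT V E = OPT V1 E1 + OPT V2 E2"
begin

lemma minimum_vertex_cover_split:
  assumes "minimum_vertex_cover V E C"
  shows "minimum_vertex_cover V1 E1 (C \<inter> V1)" and "minimum_vertex_cover V2 E2 (C \<inter> V2)"
proof -
  have C: "vertex_cover V E C" "card C = OPT V1 E1 + OPT V2 E2"
    using assms OPT_additive unfolding minimum_vertex_cover_def by auto
  note split = vertex_cover_split[OF C(1)]
  have "OPT V1 E1 \<le> card (C \<inter> V1)" "OPT V2 E2 \<le> card (C \<inter> V2)"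
    using OPT_le_card[OF graph1 split(1)] OPT_le_card[OF graph2 split(2)] .
  with C(2) split(3) have "card (C \<inter> V1) = OPT V1 E1" "card (C \<inter> V2) = OPT V2 E2"
    by linarith+
  with split(1,2) show "minimum_vertex_cover V1 E1 (C \<inter> V1)" "minimum_vertex_cover V2 E2 (C \<inter> V2)"
    unfolding minimum_vertex_cover_def by auto
qed

lemma minimum_vertex_cover_Un:
  assumes "minimum_vertex_cover V1 E1 C1" and "minimum_vertex_cover V2 E2 C2"
    and "y1 \<in> C1 \<or> y2 \<in> C2"
  shows "minimum_vertex_cover V E (C1 \<union> C2)"
  using assms vertex_cover_Un card_Un_sides OPT_additive
  unfolding minimum_vertex_cover_def vertex_cover_def by auto

lemma blocking_set_bridge:
  assumes "blocking_set V1 E1 Y1" and "blocking_set V2 E2 Y2" and "y1 \<in> Y1" and "y2 \<in> Y2"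
  shows "blocking_set V E ((Y1 \<union> Y2) - {y1, y2})"
  unfolding blocking_set_iff
proof (intro conjI allI impI notI)
  show "(Y1 \<union> Y2) - {y1, y2} \<subseteq> V" using assms(1,2) unfolding blocking_set_def by auto
  fix C assume C: "minimum_vertex_cover V E C" and Y: "(Y1 \<union> Y2) - {y1, y2} \<subseteq> C"
  have Y1: "Y1 \<subseteq> V1" and Y2: "Y2 \<subseteq> V2" using assms(1,2) unfolding blocking_set_def by auto
  have "y2 \<notin> V1" "y1 \<notin> V2" using disjoint y1_vertex y2_vertex by blast+
  have "{y1, y2} \<inter> C \<noteq> {}" using C unfolding minimum_vertex_cover_def vertex_cover_def by blast
  then consider "y1 \<in> C" | "y2 \<in> C" by blast
  then show False
  proof cases
    case 1
    with Y Y1 \<open>y2 \<notin> V1\<close> have "Y1 \<subseteq> C \<inter> V1" by auto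
    with assms(1) minimum_vertex_cover_split(1)[OF C] show False unfolding blocking_set_iff by blast
  next
    case 2
    with Y Y2 \<open>y1 \<notin> V2\<close> have "Y2 \<subseteq> C \<inter> V2" by auto
    with assms(2) minimum_vertex_cover_split(2)[OF C] show False unfolding blocking_set_iff by blast
  qed
qed

lemma not_blocking_psubset_bridge:
  assumes "minimal_blocking_set V1 E1 Y1" and "minimal_blocking_set V2 E2 Y2"
    and "y1 \<in> Y1" and "y2 \<in> Y2" and "Y' \<subset> (Y1 \<union> Y2) - {y1, y2}"
  shows "\<not> blocking_set V E Y'"
proof -
  have Y1: "Y1 \<subseteq> V1" and Y2: "Y2 \<subseteq> V2"
    using assms(1,2) minimal_blocking_set_subset by blast+
  have "y2 \<notin> V1" "y1 \<notin> V2" using disjoint y1_vertex y2_vertex by blast+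
  define A1 A2 where "A1 = Y' \<inter> V1" and "A2 = Y' \<inter> V2"
  have Y'_split: "Y' = A1 \<union> A2" using assms(5) Y1 Y2 unfolding A1_def A2_def by auto
  have A1: "A1 \<subseteq> Y1 - {y1}" and A2: "A2 \<subseteq> Y2 - {y2}"
    using assms(5) Y1 Y2 disjoint unfolding A1_def A2_def by auto
  have "(Y1 \<union> Y2) - {y1, y2} = (Y1 - {y1}) \<union> (Y2 - {y2})"
    using Y1 Y2 \<open>y2 \<notin> V1\<close> \<open>y1 \<notin> V2\<close> by auto
  with assms(5) Y'_split have "A1 \<noteq> Y1 - {y1} \<or> A2 \<noteq> Y2 - {y2}" by auto
  with A1 A2 consider "insert y1 A1 \<subset> Y1" "A2 \<subset> Y2" | "A1 \<subset> Y1" "insert y2 A2 \<subset> Y2"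
    using assms(3,4) by auto
  then obtain C1 C2 where C: "minimum_vertex_cover V1 E1 C1" "minimum_vertex_cover V2 E2 C2"
    "A1 \<subseteq> C1" "A2 \<subseteq> C2" "y1 \<in> C1 \<or> y2 \<in> C2"
  proof cases
    case 1
    obtain C1 where "minimum_vertex_cover V1 E1 C1" "insert y1 A1 \<subseteq> C1"
      using minimal_blocking_set_psubset_covered[OF assms(1) 1(1)] .
    moreover obtain C2 where "minimum_vertex_cover V2 E2 C2" "A2 \<subseteq> C2"
      using minimal_blocking_set_psubset_covered[OF assms(2) 1(2)] .
    ultimately show thesis using that by simp
  next
    case 2
    obtain C1 where "minimum_vertex_cover V1 E1 C1" "A1 \<subseteq> C1"
      using minimal_blocking_set_psubset_covered[OF assms(1) 2(1)] .
    moreover obtain C2 where "minimum_vertex_cover V2 E2 C2" "insert y2 A2 \<subseteq> C2"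
      using minimal_blocking_set_psubset_covered[OF assms(2) 2(2)] .
    ultimately show thesis using that by simp
  qed
  then have "minimum_vertex_cover V E (C1 \<union> C2)" and "Y' \<subseteq> C1 \<union> C2"
    using minimum_vertex_cover_Un Y'_split by auto
  then show ?thesis unfolding blocking_set_iff by blast
qed

end

end

theorem mainTheorem15:
  fixes V1 V2 :: "'a set" and E1 E2 :: "'a set set" and Y1 Y2 :: "'a set" and y1 y2 :: 'a
  assumes "graph V1 E1" and "graph V2 E2"
    and "V1 \<inter> V2 = {}"
    and "minimal_blocking_set V1 E1 Y1" and "card Y1 \<ge> 2"
    and "minimal_blocking_set V2 E2 Y2"
    and "y1 \<in> Y1" and "y2 \<in> Y2"
  shows "OPT (V1 \<union> V2) (E1 \<union> E2 \<union> {{y1, y2}}) = OPT V1 E1 + OPT V2 E2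
     \<and> minimal_blocking_set (V1 \<union> V2) (E1 \<union> E2 \<union> {{y1, y2}}) ((Y1 \<union> Y2) - {y1, y2})"
proof -
  interpret bridged_graphs V1 V2 E1 E2 y1 y2
    using assms minimal_blocking_set_subset by unfold_locales blast+
  obtain C1 where "minimum_vertex_cover V1 E1 C1" and "y1 \<in> C1"
    using minimal_blocking_set_member_covered[OF assms(4,7,5)] .
  then have OPT: "OPT V E = OPT V1 E1 + OPT V2 E2" by (rule OPT_eq)
  have "blocking_set V E ((Y1 \<union> Y2) - {y1, y2})"
    using blocking_set_bridge[OF OPT] assms(4,6,7,8) unfolding minimal_blocking_set_def by blast
  moreover have "\<forall>Y'. Y' \<subset> (Y1 \<union> Y2) - {y1, y2} \<longrightarrow> \<not> blocking_set V E Y'"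
    using not_blocking_psubset_bridge[OF OPT assms(4,6,7,8)] by blast
  ultimately show ?thesis using OPT unfolding minimal_blocking_set_def by blast
qed

end
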